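(* Let $s\ge1$, let $q$ be a prime power, let $C^{(1)},\ldots,C^{(s)}\in\mathbb{F}_q^{\mathbb{N}\times\mathbb{N}_0}$ be finite-row generating matrices and let $\mathbf{T}:\mathbb{N}_0\to\mathbb{N}_0$ with $\mathbf{T}(m)\le m$. If $C^{(1)},\ldots,C^{(s)}$ generate a $(\mathbf{T},s)$-sequence in base $q$ via Algorithm 1 (for some admissible choice of the bijections), then, for every choice of bijections $\psi_r,\lambda_{i,j}$, Algorithm 2 with the same matrices and the input sequence $s_n=(-1)^n\lfloor (n+1)/2\rfloor$ ($n\ge0$), viewed in $\mathbb{Z}_q$, produces a sequence $(\boldsymbol{x}_n)_{n\ge0}$ such that both subsequences $(\boldsymbol{x}_{2n})_{n\ge0}$ and $(\boldsymbol{x}_{2n+1})_{n\ge0}$ are $(\mathbf{T},s)$-sequences in base $q$.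
   Context: $\mathbb{F}_q$ is the finite field with $q$ elements, $D_q=\{0,\ldots,q-1\}$; $\mathbb{Z}_q$ is the ring of $q$-adic integers, each $z\in\mathbb{Z}_q$ having a unique representation $z=\sum_{r\ge0}a_rq^r$, $a_r\in D_q$. A matrix $(c^{(i)}_{j,r})_{j\ge1,r\ge0}$ is finite-row if each row has finitely many nonzero entries. Algorithm 2: choose bijections $\psi_r:D_q\to\mathbb{F}_q$ ($r\ge0$), finite-row matrices $C^{(i)}=(c^{(i)}_{j,r})$, bijections $\lambda_{i,j}:\mathbb{F}_q\to D_q$ and $(s_n)$ in $\mathbb{Z}_q$; with $s_n=\sum_ra_rq^r$ put $x_n^{(i)}=\sum_{j\ge1}\lambda_{i,j}(\sum_rc^{(i)}_{j,r}\psi_r(a_r))q^{-j}$, $\boldsymbol{x}_n=(x_n^{(1)},\ldots,x_n^{(s)})$. Algorithm 1 is the same with $s_n=n$ and $\psi_r(0)=0$ for all large $r$. The $m$-digit truncation $[x_n^{(i)}]_{q,m}=\sum_{j=1}^m\lambda_{i,j}(\cdots)q^{-j}$, applied coordinatewise. Elementary interval in base $q$: $\prod_i[a_iq^{-d_i},(a_i+1)q^{-d_i})$, $d_i\ge0$, $0\le a_i<q^{d_i}$. For $0\le t\le m$, a $(t,m,s)$-net in base $q$ is a set of $q^m$ points in $[0,1)^s$ with exactly $q^t$ points in every elementary interval of volume $q^{t-m}$. A sequence $(\boldsymbol{y}_n)$ is a $(\mathbf{T},s)$-sequence in base $q$ if for all $k\ge0$ and $m$ with $\mathbf{T}(m)<m$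 the points $[\boldsymbol{y}_n]_{q,m}$, $kq^m\le n<(k+1)q^m$, form a $(\mathbf{T}(m),m,s)$-net in base $q$. *)

theory Defs
  imports Complex_Main "HOL-Library.Cardinality"
begin

text \<open>Base q digit number r of the q-adic integer represented by an integer z
  (floor division, so negative integers get their q-adic expansion).\<close>
definition qdigit :: "nat \<Rightarrow> int \<Rightarrow> nat \<Rightarrow> nat" where
  "qdigit q z r = nat ((z div (int q ^ r)) mod int q)"

definition finite_row :: "nat \<Rightarrow> (nat \<Rightarrow> nat \<Rightarrow> nat \<Rightarrow> 'a::zero) \<Rightarrow> bool" where
  "finite_row s C = (\<forall>i\<in>{1..s}. \<forall>j\<ge>1. finite {r. C i j r \<noteq> 0})"

definition admissible_bij ::
  "nat \<Rightarrow> (nat \<Rightarrow> nat \<Rightarrow> 'a::finite) \<Rightarrow> (nat \<Rightarrow> nat \<Rightarrow> 'a \<Rightarrow> nat) \<Rightarrow> bool" where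
  "admissible_bij s psi lam =
     ((\<forall>r. bij_betw (psi r) {..< CARD('a)} (UNIV :: 'a set)) \<and>
      (\<forall>i\<in>{1..s}. \<forall>j\<ge>1. bij_betw (lam i j) (UNIV :: 'a set) {..< CARD('a)}))"

definition alg1_admissible ::
  "nat \<Rightarrow> (nat \<Rightarrow> nat \<Rightarrow> 'a::{zero,finite}) \<Rightarrow> (nat \<Rightarrow> nat \<Rightarrow> 'a \<Rightarrow> nat) \<Rightarrow> bool" where
  "alg1_admissible s psi lam = (admissible_bij s psi lam \<and> (\<exists>R. \<forall>r\<ge>R. psi r 0 = 0))"

text \<open>Digit j of coordinate i of the point produced by Algorithm 2 from input z in Z_q
  (integers embedded in Z_q):  lam i j (sum_r c^(i)_{j,r} psi_r(a_r)).\<close>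
definition alg_digit ::
  "(nat \<Rightarrow> nat \<Rightarrow> 'a::{field,finite}) \<Rightarrow> (nat \<Rightarrow> nat \<Rightarrow> nat \<Rightarrow> 'a) \<Rightarrow> (nat \<Rightarrow> nat \<Rightarrow> 'a \<Rightarrow> nat)
    \<Rightarrow> int \<Rightarrow> nat \<Rightarrow> nat \<Rightarrow> nat" where
  "alg_digit psi C lam z i j =
     lam i j (\<Sum>r\<in>{r. C i j r \<noteq> 0}. C i j r * psi r (qdigit CARD('a) z r))"

definition trunc_pt :: "nat \<Rightarrow> nat \<Rightarrow> (nat \<Rightarrow> nat \<Rightarrow> nat) \<Rightarrow> nat \<Rightarrow> real" where
  "trunc_pt q m dig = (\<lambda>i. \<Sum>j=1..m. real (dig i j) / real q ^ j)"

definition in_elem_interval :: "nat \<Rightarrow> nat \<Rightarrow> (nat \<Rightarrow> nat) \<Rightarrow> (nat \<Rightarrow> nat) \<Rightarrow> (nat \<Rightarrow> real) \<Rightarrow> bool" where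
  "in_elem_interval q s d a x =
     (\<forall>i\<in>{1..s}. real (a i) / real q ^ d i \<le> x i \<and> x i < (real (a i) + 1) / real q ^ d i)"

text \<open>The family (P n), n in N (counted with multiplicity), is a (t,m,s)-net in base q.
  Elementary intervals of volume q^(t-m) are exactly those with d_1+...+d_s = m-t.\<close>
definition is_net :: "nat \<Rightarrow> nat \<Rightarrow> nat \<Rightarrow> nat \<Rightarrow> (nat \<Rightarrow> nat \<Rightarrow> real) \<Rightarrow> nat set \<Rightarrow> bool" where
  "is_net q t m s P N =
     (t \<le> m \<and> finite N \<and> card N = q ^ m \<and>
      (\<forall>n\<in>N. \<forall>i\<in>{1..s}. 0 \<le> P n i \<and> P n i < 1) \<and>
      (\<forall>d a. (\<Sum>i=1..s. d i) = m - t \<and> (\<forall>i\<in>{1..s}. a i < q ^ d i) \<longrightarrow>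
         card {n\<in>N. in_elem_interval q s d a (P n)} = q ^ t))"

definition is_TS_seq :: "nat \<Rightarrow> (nat \<Rightarrow> nat) \<Rightarrow> nat \<Rightarrow> (nat \<Rightarrow> nat \<Rightarrow> nat \<Rightarrow> nat) \<Rightarrow> bool" where
  "is_TS_seq q T s dig =
     (\<forall>k m. T m < m \<longrightarrow>
        is_net q (T m) m s (\<lambda>n. trunc_pt q m (dig n)) {k * q ^ m ..< (k + 1) * q ^ m})"

definition alt_seq :: "nat \<Rightarrow> int" where
  "alt_seq n = (-1) ^ n * int ((n + 1) div 2)"

end

theory Submission
  imports Defs "HOL-Library.FuncSet"
begin

(* Within a block of q^m consecutive indices n, the q-adic digits a_r of n with r < m run
   through D_q^m exactly once, while the digits with r >= m are constant. The same holds for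
   the digits q-1-a_r of -n-1 = s_(2n+1), and s_(2n) = n. Hence on every block the first m
   digits of the generated points are lam(C_m y + b) with y ranging over F_q^m and b fixed,
   and the net property of the block is equivalent to a counting condition on the linear
   forms given by the first m columns of the C^(i), independent of psi, lam, b and the block.
   Algorithm 1 supplies this condition for every m with T m < m. *)

definition from_digits :: "nat \<Rightarrow> nat \<Rightarrow> (nat \<Rightarrow> nat) \<Rightarrow> nat" where
  "from_digits q d \<delta> = (\<Sum>j=1..d. \<delta> j * q ^ (d - j))"

lemma from_digits_0 [simp]: "from_digits q 0 \<delta> = 0"
  by (simp add: from_digits_def)

lemma from_digits_Suc: "from_digits q (Suc d) \<delta> = q * from_digits q d \<delta> + \<delta> (Suc d)"
proof -
  have "from_digits q (Suc d) \<delta> = (\<Sum>j=1..d. \<delta> j * q ^ (Suc d - j)) + \<delta> (Suc d)"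
    by (simp add: from_digits_def)
  also have "(\<Sum>j=1..d. \<delta> j * q ^ (Suc d - j)) = (\<Sum>j=1..d. q * (\<delta> j * q ^ (d - j)))"
    by (rule sum.cong) (auto simp: Suc_diff_le)
  finally show ?thesis
    by (simp add: from_digits_def sum_distrib_left)
qed

lemma from_digits_cong:
  "(\<And>j. j \<in> {1..d} \<Longrightarrow> \<delta> j = \<delta>' j) \<Longrightarrow> from_digits q d \<delta> = from_digits q d \<delta>'"
  unfolding from_digits_def by (rule sum.cong) auto

lemma from_digits_less:
  "(\<And>j. j \<in> {1..d} \<Longrightarrow> \<delta> j < q) \<Longrightarrow> from_digits q d \<delta> < q ^ d"
proof (induction d)
  case 0
  then show ?case by simp
next
  case (Suc d)
  have "from_digits q d \<delta> < q ^ d" "\<delta> (Suc d) < q"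
    using Suc by auto
  then have "q * from_digits q d \<delta> + \<delta> (Suc d) < q * (from_digits q d \<delta> + 1)"
    by simp
  also have "\<dots> \<le> q * q ^ d"
    using \<open>from_digits q d \<delta> < q ^ d\<close> by (intro mult_le_mono2) simp
  finally show ?case
    by (simp add: from_digits_Suc)
qed

lemma from_digits_eq_iff:
  assumes "\<And>j. j \<in> {1..d} \<Longrightarrow> \<delta> j < q" "\<And>j. j \<in> {1..d} \<Longrightarrow> \<delta>' j < q"
  shows "from_digits q d \<delta> = from_digits q d \<delta>' \<longleftrightarrow> (\<forall>j\<in>{1..d}. \<delta> j = \<delta>' j)"
  using assms
proof (induction d)
  case 0
  then show ?case by simp
next
  case (Suc d)
  have last: "\<delta> (Suc d) < q" "\<delta>' (Suc d) < q"
    using Suc.prems by auto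
  have "q * a + x = q * b + y \<longleftrightarrow> a = b \<and> x = y" if "x < q" "y < q" for a b x y :: nat
  proof
    assume "q * a + x = q * b + y"
    then have "(q * a + x) div q = (q * b + y) div q" "(q * a + x) mod q = (q * b + y) mod q"
      by simp_all
    then show "a = b \<and> x = y"
      using that by simp
  qed simp
  then have "from_digits q (Suc d) \<delta> = from_digits q (Suc d) \<delta>' \<longleftrightarrow>
      from_digits q d \<delta> = from_digits q d \<delta>' \<and> \<delta> (Suc d) = \<delta>' (Suc d)"
    using last by (simp add: from_digits_Suc)
  also have "\<dots> \<longleftrightarrow> (\<forall>j\<in>{1..Suc d}. \<delta> j = \<delta>' j)"
    using Suc by (auto simp: atLeastAtMostSuc_conv)
  finally show ?case .
qed

lemma from_digits_surj:
  "a < q ^ d \<Longrightarrow> \<exists>\<delta>. (\<forall>j\<in>{1..d}. \<delta> j < q) \<and> from_digits q d \<delta> = a"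
proof (induction d arbitrary: a)
  case 0
  then show ?case by simp
next
  case (Suc d)
  have q: "q > 0"
    using Suc.prems by (cases q) auto
  have "a div q < q ^ d"
    using Suc.prems q by (simp add: div_less_iff_less_mult mult.commute)
  then obtain \<delta> where \<delta>: "\<forall>j\<in>{1..d}. \<delta> j < q" "from_digits q d \<delta> = a div q"
    using Suc.IH by blast
  define \<delta>' where "\<delta>' = \<delta>(Suc d := a mod q)"
  have "from_digits q d \<delta>' = from_digits q d \<delta>"
    by (rule from_digits_cong) (auto simp: \<delta>'_def)
  then have "from_digits q (Suc d) \<delta>' = a"
    using \<delta> by (simp add: from_digits_Suc \<delta>'_def)
  moreover have "\<forall>j\<in>{1..Suc d}. \<delta>' j < q"
    using \<delta> q by (auto simp: \<delta>'_def)
  ultimately show ?case by blast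
qed

lemma digit_sum_le:
  assumes "q > 0" "\<And>j. j \<in> {1..m} \<Longrightarrow> \<delta> j < q"
  shows "(\<Sum>j=1..m. real (\<delta> j) / real q ^ j) \<le> 1 - 1 / real q ^ m"
  using assms(2)
proof (induction m)
  case 0
  then show ?case by simp
next
  case (Suc m)
  have "\<delta> (Suc m) + 1 \<le> q"
    using Suc.prems by (simp add: Suc_le_eq)
  then have "real (\<delta> (Suc m)) \<le> real q - 1"
    by linarith
  then have "real (\<delta> (Suc m)) / real q ^ Suc m \<le> (real q - 1) / real q ^ Suc m"
    by (simp add: divide_right_mono)
  also have "\<dots> = 1 / real q ^ m - 1 / real q ^ Suc m"
    using assms(1) by (simp add: field_simps)
  finally show ?case
    using Suc by simp
qed

lemma digit_sum_in_unit_interval: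
  assumes "q > 0" "\<And>j. j \<in> {1..m} \<Longrightarrow> \<delta> j < q"
  shows "0 \<le> (\<Sum>j=1..m. real (\<delta> j) / real q ^ j) \<and> (\<Sum>j=1..m. real (\<delta> j) / real q ^ j) < 1"
proof -
  have "0 < 1 / real q ^ m"
    using assms(1) by simp
  moreover have "0 \<le> (\<Sum>j=1..m. real (\<delta> j) / real q ^ j)"
    by (intro sum_nonneg) simp
  moreover have "(\<Sum>j=1..m. real (\<delta> j) / real q ^ j) \<le> 1 - 1 / real q ^ m"
    by (rule digit_sum_le) (use assms in auto)
  ultimately show ?thesis
    by linarith
qed

lemma digit_sum_split:
  assumes "d \<le> m" "q > 0"
  shows "real q ^ d * (\<Sum>j=1..m. real (\<delta> j) / real q ^ j)
       = real (from_digits q d \<delta>) + (\<Sum>j=1..m-d. real (\<delta> (j + d)) / real q ^ j)"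
proof -
  obtain p where m: "m = d + p"
    using assms(1) by (metis le_add_diff_inverse)
  have "(\<Sum>j=1..m. real (\<delta> j) / real q ^ j) = (\<Sum>j=1..d. real (\<delta> j) / real q ^ j)
        + (\<Sum>j=d+1..d+p. real (\<delta> j) / real q ^ j)"
    unfolding m by (rule sum.ub_add_nat) simp
  also have "(\<Sum>j=d+1..d+p. real (\<delta> j) / real q ^ j)
      = (\<Sum>j=1..p. real (\<delta> (j + d)) / real q ^ (j + d))"
    using sum.shift_bounds_cl_nat_ivl[of "\<lambda>j. real (\<delta> j) / real q ^ j" 1 d p]
    by (simp add: add.commute)
  finally have "(\<Sum>j=1..m. real (\<delta> j) / real q ^ j) = (\<Sum>j=1..d. real (\<delta> j) / real q ^ j)
        + (\<Sum>j=1..p. real (\<delta> (j + d)) / real q ^ (j + d))" .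
  moreover have "real q ^ d * (real (\<delta> j) / real q ^ j) = real (\<delta> j * q ^ (d - j))"
    if "j \<in> {1..d}" for j
  proof -
    have "real q ^ d = real q ^ j * real q ^ (d - j)"
      using that by (simp add: power_add[symmetric])
    then show ?thesis
      using assms(2) by simp
  qed
  moreover have "real q ^ d * (real (\<delta> (j + d)) / real q ^ (j + d)) = real (\<delta> (j + d)) / real q ^ j"
    for j
    using assms(2) by (simp add: power_add)
  ultimately show ?thesis
    by (simp add: distrib_left sum_distrib_left from_digits_def m)
qed

text \<open>The digits beyond position d contribute less than q^-d.\<close>
lemma digit_sum_in_interval_iff:
  assumes "q > 0" "d \<le> m" "\<And>j. j \<in> {1..m} \<Longrightarrow> \<delta> j < q"
  shows "(real a / real q ^ d \<le> (\<Sum>j=1..m. real (\<delta> j) / real q ^ j) \<and>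
          (\<Sum>j=1..m. real (\<delta> j) / real q ^ j) < (real a + 1) / real q ^ d)
       \<longleftrightarrow> from_digits q d \<delta> = a"
proof -
  define x where "x = (\<Sum>j=1..m. real (\<delta> j) / real q ^ j)"
  define rest where "rest = (\<Sum>j=1..m-d. real (\<delta> (j + d)) / real q ^ j)"
  have x: "real q ^ d * x = real (from_digits q d \<delta>) + rest"
    unfolding x_def rest_def using digit_sum_split assms by blast
  have "0 \<le> rest \<and> rest < 1"
    unfolding rest_def by (rule digit_sum_in_unit_interval) (use assms in auto)
  moreover have "real a / real q ^ d \<le> x \<longleftrightarrow> real a \<le> real q ^ d * x"
    "x < (real a + 1) / real q ^ d \<longleftrightarrow> real q ^ d * x < real a + 1"
    using assms(1) by (simp_all add: pos_divide_le_eq pos_less_divide_eq mult.commute)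
  ultimately show ?thesis
    unfolding x_def[symmetric] x by linarith
qed

lemma in_elem_interval_trunc_pt_iff:
  assumes "q > 0" "\<forall>i\<in>{1..s}. d i \<le> m"
    and "\<forall>i\<in>{1..s}. \<forall>j\<in>{1..m}. dig i j < q" "\<forall>i\<in>{1..s}. \<forall>j\<in>{1..d i}. \<delta> i j < q"
  shows "in_elem_interval q s d (\<lambda>i. from_digits q (d i) (\<delta> i)) (trunc_pt q m dig)
     \<longleftrightarrow> (\<forall>i\<in>{1..s}. \<forall>j\<in>{1..d i}. dig i j = \<delta> i j)"
proof -
  have "in_elem_interval q s d (\<lambda>i. from_digits q (d i) (\<delta> i)) (trunc_pt q m dig)
     \<longleftrightarrow> (\<forall>i\<in>{1..s}. from_digits q (d i) (dig i) = from_digits q (d i) (\<delta> i))"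
    unfolding in_elem_interval_def trunc_pt_def
    using digit_sum_in_interval_iff[OF assms(1)] assms(2,3) by auto
  also have "\<dots> \<longleftrightarrow> (\<forall>i\<in>{1..s}. \<forall>j\<in>{1..d i}. dig i j = \<delta> i j)"
  proof (intro ball_cong refl)
    fix i assume "i \<in> {1..s}"
    then show "from_digits q (d i) (dig i) = from_digits q (d i) (\<delta> i)
        \<longleftrightarrow> (\<forall>j\<in>{1..d i}. dig i j = \<delta> i j)"
      by (intro from_digits_eq_iff) (use assms(2-4) in fastforce)+
  qed
  finally show ?thesis .
qed

lemma elem_interval_from_digits:
  assumes "\<forall>i\<in>{1..s}. a i < q ^ d i"
  obtains \<delta> where "\<forall>i\<in>{1..s}. \<forall>j\<in>{1..d i}. \<delta> i j < q"
    and "in_elem_interval q s d a = in_elem_interval q s d (\<lambda>i. from_digits q (d i) (\<delta> i))"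
proof -
  have "\<forall>i\<in>{1..s}. \<exists>\<delta>. (\<forall>j\<in>{1..d i}. \<delta> j < q) \<and> from_digits q (d i) \<delta> = a i"
    using assms from_digits_surj by blast
  then obtain \<delta> where "\<forall>i\<in>{1..s}. (\<forall>j\<in>{1..d i}. \<delta> i j < q) \<and> from_digits q (d i) (\<delta> i) = a i"
    by (metis (mono_tags))
  then show ?thesis
    by (intro that) (auto simp: in_elem_interval_def fun_eq_iff)
qed

definition prefix_fibre ::
  "nat \<Rightarrow> (nat \<Rightarrow> nat) \<Rightarrow> 'n set \<Rightarrow> ('n \<Rightarrow> nat \<Rightarrow> nat \<Rightarrow> 'b) \<Rightarrow> (nat \<Rightarrow> nat \<Rightarrow> 'b) \<Rightarrow> 'n set" where
  "prefix_fibre s d N v \<tau> = {n\<in>N. \<forall>i\<in>{1..s}. \<forall>j\<in>{1..d i}. v n i j = \<tau> i j}"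

lemma elem_interval_points_eq_prefix_fibre:
  assumes "q > 0" "(\<Sum>i=1..s. d i) = m - t"
    and "\<forall>n\<in>N. \<forall>i\<in>{1..s}. \<forall>j\<in>{1..m}. dig n i j < q" "\<forall>i\<in>{1..s}. \<forall>j\<in>{1..d i}. \<delta> i j < q"
  shows "{n\<in>N. in_elem_interval q s d (\<lambda>i. from_digits q (d i) (\<delta> i)) (trunc_pt q m (dig n))}
      = prefix_fibre s d N dig \<delta>"
proof -
  have "\<forall>i\<in>{1..s}. d i \<le> m"
    using assms(2) member_le_sum[of _ "{1..s}" d] by fastforce
  then show ?thesis
    unfolding prefix_fibre_def using in_elem_interval_trunc_pt_iff[OF assms(1) _ _ assms(4)] assms(3)
    by auto
qed

lemma prefix_counts_if_is_net:
  assumes "q > 0" "is_net q t m s (\<lambda>n. trunc_pt q m (dig n)) N"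
    and "\<forall>n\<in>N. \<forall>i\<in>{1..s}. \<forall>j\<in>{1..m}. dig n i j < q"
    and d: "(\<Sum>i=1..s. d i) = m - t" and \<delta>: "\<forall>i\<in>{1..s}. \<forall>j\<in>{1..d i}. \<delta> i j < q"
  shows "card (prefix_fibre s d N dig \<delta>) = q ^ t"
proof -
  have net_count: "card {n\<in>N. in_elem_interval q s d a (trunc_pt q m (dig n))} = q ^ t"
    if "\<forall>i\<in>{1..s}. a i < q ^ d i" for a
    using assms(2) d that unfolding is_net_def by blast
  have "\<forall>i\<in>{1..s}. from_digits q (d i) (\<delta> i) < q ^ d i"
    using \<delta> by (auto intro: from_digits_less)
  from net_count[OF this] show ?thesis
    by (simp only: elem_interval_points_eq_prefix_fibre[OF assms(1) d assms(3) \<delta>])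
qed

lemma is_net_if_prefix_counts:
  assumes q: "q > 0" and "t \<le> m" "finite N" "card N = q ^ m"
    and dig: "\<forall>n\<in>N. \<forall>i\<in>{1..s}. \<forall>j\<in>{1..m}. dig n i j < q"
    and counts: "\<And>d \<delta>. (\<Sum>i=1..s. d i) = m - t \<Longrightarrow> \<forall>i\<in>{1..s}. \<forall>j\<in>{1..d i}. \<delta> i j < q \<Longrightarrow>
      card (prefix_fibre s d N dig \<delta>) = q ^ t"
  shows "is_net q t m s (\<lambda>n. trunc_pt q m (dig n)) N"
  unfolding is_net_def
proof (intro conjI allI impI ballI)
  fix n i assume "n \<in> N" "i \<in> {1..s}"
  then show "0 \<le> trunc_pt q m (dig n) i" "trunc_pt q m (dig n) i < 1"
    unfolding trunc_pt_def using digit_sum_in_unit_interval[OF q, of m "dig n i"] dig by auto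
next
  fix d a
  assume "(\<Sum>i=1..s. d i) = m - t \<and> (\<forall>i\<in>{1..s}. a i < q ^ d i)"
  then have d: "(\<Sum>i=1..s. d i) = m - t" and a: "\<forall>i\<in>{1..s}. a i < q ^ d i"
    by simp_all
  obtain \<delta> where \<delta>: "\<forall>i\<in>{1..s}. \<forall>j\<in>{1..d i}. \<delta> i j < q"
    and "in_elem_interval q s d a = in_elem_interval q s d (\<lambda>i. from_digits q (d i) (\<delta> i))"
    by (rule elem_interval_from_digits[OF a])
  then show "card {n\<in>N. in_elem_interval q s d a (trunc_pt q m (dig n))} = q ^ t"
    using counts[OF d \<delta>] elem_interval_points_eq_prefix_fibre[OF q d dig \<delta>] by simp
qed (use assms(2-4) in simp_all)

lemma is_net_trunc_pt_iff:
  assumes "q > 0" "t \<le> m" "finite N" "card N = q ^ m"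
    and "\<forall>n\<in>N. \<forall>i\<in>{1..s}. \<forall>j\<in>{1..m}. dig n i j < q"
  shows "is_net q t m s (\<lambda>n. trunc_pt q m (dig n)) N \<longleftrightarrow>
    (\<forall>d. (\<Sum>i=1..s. d i) = m - t \<longrightarrow>
       (\<forall>\<delta>. (\<forall>i\<in>{1..s}. \<forall>j\<in>{1..d i}. \<delta> i j < q) \<longrightarrow> card (prefix_fibre s d N dig \<delta>) = q ^ t))"
  using prefix_counts_if_is_net[OF assms(1) _ assms(5)] is_net_if_prefix_counts[OF assms]
  by blast

lemma card_prefix_fibre_bij_iff:
  assumes lam: "\<forall>i\<in>{1..s}. \<forall>j\<ge>1. bij_betw (lam i j) UNIV {..<q}"
  shows "(\<forall>\<delta>. (\<forall>i\<in>{1..s}. \<forall>j\<in>{1..d i}. \<delta> i j < q) \<longrightarrow>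
            card (prefix_fibre s d N (\<lambda>n i j. lam i j (v n i j)) \<delta>) = c)
     \<longleftrightarrow> (\<forall>\<tau>. card (prefix_fibre s d N v \<tau>) = c)"
    (is "?digit_counts \<longleftrightarrow> ?value_counts")
proof -
  have lam_lt: "lam i j x < q" and lam_eq_iff: "lam i j x = lam i j x' \<longleftrightarrow> x = x'"
    and lam_inv: "y < q \<Longrightarrow> lam i j (inv_into UNIV (lam i j) y) = y"
    if "i \<in> {1..s}" "j \<ge> 1" for i j x x' y
  proof -
    have bij: "bij_betw (lam i j) UNIV {..<q}"
      using lam that by blast
    then show "lam i j x < q"
      using bij_betw_apply by fastforce
    show "lam i j x = lam i j x' \<longleftrightarrow> x = x'"
      using bij_betw_imp_inj_on[OF bij] by (auto dest: injD)
    show "y < q \<Longrightarrow> lam i j (inv_into UNIV (lam i j) y) = y"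
      using bij_betw_inv_into_right[OF bij] by simp
  qed
  have lam_fibre: "prefix_fibre s d N (\<lambda>n i j. lam i j (v n i j)) (\<lambda>i j. lam i j (\<tau> i j))
      = prefix_fibre s d N v \<tau>" for \<tau>
    unfolding prefix_fibre_def using lam_eq_iff by auto
  show ?thesis
  proof
    assume digit_counts: ?digit_counts
    show ?value_counts
    proof
      fix \<tau>
      have "card (prefix_fibre s d N (\<lambda>n i j. lam i j (v n i j)) (\<lambda>i j. lam i j (\<tau> i j))) = c"
        using digit_counts lam_lt by auto
      then show "card (prefix_fibre s d N v \<tau>) = c"
        by (simp only: lam_fibre)
    qed
  next
    assume value_counts: ?value_counts
    show ?digit_counts
    proof (intro allI impI)
      fix \<delta> assume \<delta>: "\<forall>i\<in>{1..s}. \<forall>j\<in>{1..d i}. \<delta> i j < q"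
      define \<tau> where "\<tau> i j = inv_into UNIV (lam i j) (\<delta> i j)" for i j
      have "prefix_fibre s d N (\<lambda>n i j. lam i j (v n i j)) \<delta>
          = prefix_fibre s d N (\<lambda>n i j. lam i j (v n i j)) (\<lambda>i j. lam i j (\<tau> i j))"
        using \<delta> lam_inv unfolding prefix_fibre_def \<tau>_def by auto
      then show "card (prefix_fibre s d N (\<lambda>n i j. lam i j (v n i j)) \<delta>) = c"
        using value_counts by (simp only: lam_fibre)
    qed
  qed
qed

lemma card_prefix_fibre_affine_iff:
  fixes v :: "'n \<Rightarrow> nat \<Rightarrow> nat \<Rightarrow> 'a::ab_group_add"
  assumes y: "bij_betw y N Y"
    and v: "\<And>n i j. n \<in> N \<Longrightarrow> i \<in> {1..s} \<Longrightarrow> j \<ge> 1 \<Longrightarrow> v n i j = L (y n) i j + b i j"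
  shows "(\<forall>\<tau>. card (prefix_fibre s d N v \<tau>) = c) \<longleftrightarrow> (\<forall>\<tau>. card (prefix_fibre s d Y L \<tau>) = c)"
proof -
  have shift: "card (prefix_fibre s d N v \<tau>) = card (prefix_fibre s d Y L (\<lambda>i j. \<tau> i j - b i j))"
    for \<tau>
  proof (rule bij_betw_same_card)
    have "(\<forall>i\<in>{1..s}. \<forall>j\<in>{1..d i}. L (y n) i j = \<tau> i j - b i j)
        \<longleftrightarrow> (\<forall>i\<in>{1..s}. \<forall>j\<in>{1..d i}. v n i j = \<tau> i j)" if "n \<in> N" for n
      using v[OF that] by (auto simp: eq_diff_eq)
    then show "bij_betw y (prefix_fibre s d N v \<tau>) (prefix_fibre s d Y L (\<lambda>i j. \<tau> i j - b i j))"
      unfolding prefix_fibre_def by (rule bij_betw_Collect[OF y])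
  qed
  show ?thesis
  proof
    assume all: "\<forall>\<tau>. card (prefix_fibre s d N v \<tau>) = c"
    show "\<forall>\<tau>. card (prefix_fibre s d Y L \<tau>) = c"
    proof
      fix \<tau>
      show "card (prefix_fibre s d Y L \<tau>) = c"
        using all shift[of "\<lambda>i j. \<tau> i j + b i j"] by simp
    qed
  qed (simp add: shift)
qed

definition row_form :: "(nat \<Rightarrow> nat \<Rightarrow> nat \<Rightarrow> 'a::semiring_0) \<Rightarrow> nat \<Rightarrow> nat \<Rightarrow> nat \<Rightarrow> (nat \<Rightarrow> 'a) \<Rightarrow> 'a" where
  "row_form C m i j y = (\<Sum>r\<in>{r. C i j r \<noteq> 0} \<inter> {..<m}. C i j r * y r)"

text \<open>Counting form of the classical condition that the first m columns of the C i generate a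
  digital (t,m,s)-net.\<close>
definition generates_net :: "nat \<Rightarrow> (nat \<Rightarrow> nat \<Rightarrow> nat \<Rightarrow> 'a::{field,finite}) \<Rightarrow> nat \<Rightarrow> nat \<Rightarrow> bool" where
  "generates_net s C m t \<longleftrightarrow> (\<forall>d. (\<Sum>i=1..s. d i) = m - t \<longrightarrow>
     (\<forall>\<tau>. card (prefix_fibre s d (PiE {..<m} (\<lambda>_. UNIV)) (\<lambda>y i j. row_form C m i j y) \<tau>)
          = CARD('a) ^ t))"

definition digit_block :: "nat \<Rightarrow> 'n set \<Rightarrow> ('n \<Rightarrow> nat \<Rightarrow> nat) \<Rightarrow> bool" where
  "digit_block m N g \<longleftrightarrow>
     (\<forall>n\<in>N. \<forall>n'\<in>N. (\<forall>r\<ge>m. g n r = g n' r) \<and> ((\<forall>r<m. g n r = g n' r) \<longrightarrow> n = n'))"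

lemma digit_block_bij:
  fixes psi :: "nat \<Rightarrow> nat \<Rightarrow> 'a::finite"
  assumes psi: "\<forall>r. bij_betw (psi r) {..<CARD('a)} UNIV"
    and g: "digit_block m N g" "\<forall>n r. g n r < CARD('a)"
    and N: "card N = CARD('a) ^ m"
  shows "bij_betw (\<lambda>n. restrict (\<lambda>r. psi r (g n r)) {..<m}) N (PiE {..<m} (\<lambda>_. UNIV))"
proof -
  let ?y = "\<lambda>n. restrict (\<lambda>r. psi r (g n r)) {..<m}"
  have inj: "inj_on ?y N"
  proof (rule inj_onI)
    fix n n' assume n: "n \<in> N" "n' \<in> N" and "?y n = ?y n'"
    have "g n r = g n' r" if "r < m" for r
    proof -
      have "psi r (g n r) = psi r (g n' r)"
        using fun_cong[OF \<open>?y n = ?y n'\<close>, of r] that by simp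
      moreover have "inj_on (psi r) {..<CARD('a)}"
        using psi bij_betw_imp_inj_on by blast
      ultimately show ?thesis
        using g(2) by (auto dest: inj_onD)
    qed
    then show "n = n'"
      using g(1) n unfolding digit_block_def by blast
  qed
  have "?y ` N = PiE {..<m} (\<lambda>_. UNIV)"
  proof (rule card_subset_eq)
    show "finite (PiE {..<m} (\<lambda>_. UNIV :: 'a set))"
      by (simp add: finite_PiE)
    show "?y ` N \<subseteq> PiE {..<m} (\<lambda>_. UNIV)"
      by (rule image_subsetI) simp
    show "card (?y ` N) = card (PiE {..<m} (\<lambda>_. UNIV :: 'a set))"
      using N by (simp add: card_image[OF inj] card_PiE)
  qed
  with inj show ?thesis
    unfolding bij_betw_def ..
qed

text \<open>On a digit block the inputs agree beyond digit m, so the tail of each row of C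
  contributes a constant.\<close>
lemma digit_block_row_form_decomp:
  fixes C :: "nat \<Rightarrow> nat \<Rightarrow> nat \<Rightarrow> 'a::comm_ring"
  assumes fr: "finite_row s C" and g: "digit_block m N g" and n: "n \<in> N" "n0 \<in> N"
    and ij: "i \<in> {1..s}" "j \<ge> 1"
  shows "(\<Sum>r\<in>{r. C i j r \<noteq> 0}. C i j r * psi r (g n r))
    = row_form C m i j (restrict (\<lambda>r. psi r (g n r)) {..<m})
      + (\<Sum>r\<in>{r. C i j r \<noteq> 0} - {..<m}. C i j r * psi r (g n0 r))"
proof -
  let ?S = "{r. C i j r \<noteq> 0}"
  have "finite ?S"
    using fr ij unfolding finite_row_def by auto
  then have "(\<Sum>r\<in>?S. C i j r * psi r (g n r))
      = (\<Sum>r\<in>?S \<inter> {..<m}. C i j r * psi r (g n r)) + (\<Sum>r\<in>?S - {..<m}. C i j r * psi r (g n r))"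
    by (rule sum.Int_Diff)
  also have "(\<Sum>r\<in>?S \<inter> {..<m}. C i j r * psi r (g n r))
      = row_form C m i j (restrict (\<lambda>r. psi r (g n r)) {..<m})"
    unfolding row_form_def by (rule sum.cong) auto
  also have "(\<Sum>r\<in>?S - {..<m}. C i j r * psi r (g n r)) = (\<Sum>r\<in>?S - {..<m}. C i j r * psi r (g n0 r))"
  proof (rule sum.cong)
    fix r assume "r \<in> ?S - {..<m}"
    then have "m \<le> r"
      by simp
    then have "g n r = g n0 r"
      using g n unfolding digit_block_def by blast
    then show "C i j r * psi r (g n r) = C i j r * psi r (g n0 r)"
      by simp
  qed simp
  finally show ?thesis .
qed

lemma alg_block_is_net_iff:
  fixes C :: "nat \<Rightarrow> nat \<Rightarrow> nat \<Rightarrow> 'a::{field,finite}"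
  assumes adm: "admissible_bij s psi lam" and fr: "finite_row s C" and "t \<le> m"
    and N: "finite N" "card N = CARD('a) ^ m"
    and block: "digit_block m N (\<lambda>n. qdigit CARD('a) (z n))"
  shows "is_net CARD('a) t m s (\<lambda>n. trunc_pt CARD('a) m (alg_digit psi C lam (z n))) N
    \<longleftrightarrow> generates_net s C m t"
proof -
  let ?q = "CARD('a)"
  define g where "g n = qdigit ?q (z n)" for n
  define v where "v n i j = (\<Sum>r\<in>{r. C i j r \<noteq> 0}. C i j r * psi r (g n r))" for n i j
  have alg: "alg_digit psi C lam (z n) = (\<lambda>i j. lam i j (v n i j))" for n
    by (simp add: alg_digit_def v_def g_def fun_eq_iff)
  have lam: "\<forall>i\<in>{1..s}. \<forall>j\<ge>1. bij_betw (lam i j) UNIV {..<?q}"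
    using adm unfolding admissible_bij_def by simp
  then have dig: "\<forall>n\<in>N. \<forall>i\<in>{1..s}. \<forall>j\<in>{1..m}. lam i j (v n i j) < ?q"
    using bij_betw_apply[OF _ UNIV_I] by fastforce
  have "\<forall>n r. g n r < ?q"
    by (simp add: g_def qdigit_def nat_less_iff)
  moreover have g_block: "digit_block m N g"
    using block by (simp add: g_def[abs_def])
  ultimately have y: "bij_betw (\<lambda>n. restrict (\<lambda>r. psi r (g n r)) {..<m}) N (PiE {..<m} (\<lambda>_. UNIV))"
    using adm N(2) by (intro digit_block_bij) (simp_all add: admissible_bij_def)
  have "N \<noteq> {}"
    using N by auto
  then obtain n0 where n0: "n0 \<in> N"
    by blast
  define b where "b i j = (\<Sum>r\<in>{r. C i j r \<noteq> 0} - {..<m}. C i j r * psi r (g n0 r))" for i j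
  have v: "v n i j = row_form C m i j (restrict (\<lambda>r. psi r (g n r)) {..<m}) + b i j"
    if "n \<in> N" "i \<in> {1..s}" "j \<ge> 1" for n i j
    unfolding v_def b_def by (rule digit_block_row_form_decomp[OF fr g_block that(1) n0 that(2,3)])
  have "is_net ?q t m s (\<lambda>n. trunc_pt ?q m (alg_digit psi C lam (z n))) N \<longleftrightarrow>
      (\<forall>d. (\<Sum>i=1..s. d i) = m - t \<longrightarrow> (\<forall>\<delta>. (\<forall>i\<in>{1..s}. \<forall>j\<in>{1..d i}. \<delta> i j < ?q) \<longrightarrow>
         card (prefix_fibre s d N (\<lambda>n i j. lam i j (v n i j)) \<delta>) = ?q ^ t))"
    unfolding alg by (rule is_net_trunc_pt_iff) (use assms(3-5) dig in simp_all)
  also have "\<dots> \<longleftrightarrow> (\<forall>d. (\<Sum>i=1..s. d i) = m - t \<longrightarrow> (\<forall>\<tau>. card (prefix_fibre s d N v \<tau>) = ?q ^ t))"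
    by (simp only: card_prefix_fibre_bij_iff[OF lam])
  also have "\<dots> \<longleftrightarrow> generates_net s C m t"
    unfolding generates_net_def
    by (simp only: card_prefix_fibre_affine_iff[where L = "\<lambda>y i j. row_form C m i j y", OF y v])
  finally show ?thesis .
qed

lemma is_TS_seq_iff_generates_net:
  fixes C :: "nat \<Rightarrow> nat \<Rightarrow> nat \<Rightarrow> 'a::{field,finite}"
  assumes "admissible_bij s psi lam" "finite_row s C"
    and "\<And>k m. digit_block m {k * CARD('a) ^ m ..< (k + 1) * CARD('a) ^ m} (\<lambda>n. qdigit CARD('a) (z n))"
  shows "is_TS_seq CARD('a) T s (\<lambda>n. alg_digit psi C lam (z n))
    \<longleftrightarrow> (\<forall>m. T m < m \<longrightarrow> generates_net s C m (T m))"
proof -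
  have block_iff: "is_net CARD('a) (T m) m s (\<lambda>n. trunc_pt CARD('a) m (alg_digit psi C lam (z n)))
      {k * CARD('a) ^ m ..< (k + 1) * CARD('a) ^ m} \<longleftrightarrow> generates_net s C m (T m)"
    if "T m < m" for k m
    by (rule alg_block_is_net_iff) (use assms that in \<open>simp_all add: algebra_simps\<close>)
  show ?thesis
  proof (intro iffI allI impI)
    fix m
    assume "is_TS_seq CARD('a) T s (\<lambda>n. alg_digit psi C lam (z n))" and m: "T m < m"
    then have "is_net CARD('a) (T m) m s (\<lambda>n. trunc_pt CARD('a) m (alg_digit psi C lam (z n)))
        {0 * CARD('a) ^ m ..< (0 + 1) * CARD('a) ^ m}"
      unfolding is_TS_seq_def by blast
    then show "generates_net s C m (T m)"
      by (simp only: block_iff[OF m])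
  next
    assume gen: "\<forall>m. T m < m \<longrightarrow> generates_net s C m (T m)"
    show "is_TS_seq CARD('a) T s (\<lambda>n. alg_digit psi C lam (z n))"
      unfolding is_TS_seq_def
    proof (intro allI impI)
      fix k m assume m: "T m < m"
      then show "is_net CARD('a) (T m) m s (\<lambda>n. trunc_pt CARD('a) m (alg_digit psi C lam (z n)))
          {k * CARD('a) ^ m ..< (k + 1) * CARD('a) ^ m}"
        using gen by (simp only: block_iff[OF m])
    qed
  qed
qed

lemma digit_block_nat_digits:
  assumes "q > 0"
  shows "digit_block m {k * q ^ m ..< (k + 1) * q ^ m} (\<lambda>n r. n div q ^ r mod q)"
  unfolding digit_block_def
proof (intro ballI conjI allI impI)
  fix n n' assume n: "n \<in> {k * q ^ m ..< (k + 1) * q ^ m}" "n' \<in> {k * q ^ m ..< (k + 1) * q ^ m}"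
  have high: "n div q ^ m = k" "n' div q ^ m = k"
    using n assms by (auto intro!: div_nat_eqI simp: algebra_simps)
  show "n div q ^ r mod q = n' div q ^ r mod q" if "m \<le> r" for r
  proof -
    have "q ^ r = q ^ m * q ^ (r - m)"
      using that by (simp flip: power_add)
    then have "x div q ^ r = x div q ^ m div q ^ (r - m)" for x
      by (simp add: div_mult2_eq)
    then show ?thesis
      using high by simp
  qed
  assume low: "\<forall>r<m. n div q ^ r mod q = n' div q ^ r mod q"
  have low_mod: "n mod q ^ r = n' mod q ^ r" if "r \<le> m" for r
    using that
  proof (induction r)
    case 0
    then show ?case by simp
  next
    case (Suc r)
    then show ?case
      using low by (simp only: power_Suc2 mod_mult2_eq)
  qed
  from low_mod[OF order_refl] high show "n = n'"
    by (metis div_mult_mod_eq)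
qed

lemma minus_one_minus_div_mod:
  fixes a b :: int
  assumes "b > 0"
  shows "(- a - 1) div b = - (a div b) - 1" "(- a - 1) mod b = b - 1 - a mod b"
proof -
  have eq: "- a - 1 = (b - 1 - a mod b) + (- (a div b) - 1) * b"
    by (simp add: algebra_simps)
  have "0 \<le> b - 1 - a mod b" "b - 1 - a mod b < b"
    using pos_mod_sign[OF assms, of a] pos_mod_bound[OF assms, of a] by linarith+
  then show "(- a - 1) div b = - (a div b) - 1" "(- a - 1) mod b = b - 1 - a mod b"
    unfolding eq by simp_all
qed

lemma qdigit_of_nat: "qdigit q (int n) r = n div q ^ r mod q"
  unfolding qdigit_def by (simp flip: of_nat_power zdiv_int zmod_int)

lemma qdigit_minus_of_nat:
  assumes "q > 0"
  shows "qdigit q (- int n - 1) r = q - 1 - n div q ^ r mod q"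
proof -
  have "(- int n - 1) div int q ^ r = - int (n div q ^ r) - 1"
    using minus_one_minus_div_mod(1)[of "int q ^ r" "int n"] assms by (simp add: zdiv_int)
  moreover have "(- int (n div q ^ r) - 1) mod int q = int q - 1 - int (n div q ^ r mod q)"
    using minus_one_minus_div_mod(2)[of "int q" "int (n div q ^ r)"] assms by (simp add: zmod_int)
  moreover have "n div q ^ r mod q < q"
    using assms by simp
  ultimately show ?thesis
    unfolding qdigit_def by (simp add: nat_diff_distrib of_nat_diff)
qed

lemma digit_block_complement:
  assumes block: "digit_block m N g" and g: "\<forall>n r. g n r < q"
  shows "digit_block m N (\<lambda>n r. q - 1 - g n r)"
  unfolding digit_block_def
proof (intro ballI conjI allI impI)
  fix n n' assume n: "n \<in> N" "n' \<in> N"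
  have eq: "q - 1 - g n r = q - 1 - g n' r \<longleftrightarrow> g n r = g n' r" for r
    using g[rule_format, of n r] g[rule_format, of n' r] by linarith
  show "q - 1 - g n r = q - 1 - g n' r" if "m \<le> r" for r
  proof -
    have "g n r = g n' r"
      using block n that unfolding digit_block_def by blast
    then show ?thesis
      by simp
  qed
  assume "\<forall>r<m. q - 1 - g n r = q - 1 - g n' r"
  then have "\<forall>r<m. g n r = g n' r"
    by (simp only: eq)
  then show "n = n'"
    using block n unfolding digit_block_def by blast
qed

lemma digit_block_qdigit_of_nat:
  assumes "q > 0"
  shows "digit_block m {k * q ^ m ..< (k + 1) * q ^ m} (\<lambda>n. qdigit q (int n))"
proof -
  have "qdigit q (int n) = (\<lambda>r. n div q ^ r mod q)" for n
    by (simp add: fun_eq_iff qdigit_of_nat)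
  then show ?thesis
    using digit_block_nat_digits[OF assms] by (simp only:)
qed

lemma digit_block_qdigit_minus_of_nat:
  assumes "q > 0"
  shows "digit_block m {k * q ^ m ..< (k + 1) * q ^ m} (\<lambda>n. qdigit q (- int n - 1))"
proof -
  have "qdigit q (- int n - 1) = (\<lambda>r. q - 1 - n div q ^ r mod q)" for n
    using assms by (simp add: fun_eq_iff qdigit_minus_of_nat)
  moreover have "digit_block m {k * q ^ m ..< (k + 1) * q ^ m} (\<lambda>n r. q - 1 - n div q ^ r mod q)"
    using assms by (intro digit_block_complement digit_block_nat_digits) simp_all
  ultimately show ?thesis
    by (simp only:)
qed

theorem corollary1:
  fixes C :: "nat \<Rightarrow> nat \<Rightarrow> nat \<Rightarrow> 'a::{field,finite}"
    and T :: "nat \<Rightarrow> nat" and s :: nat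
    and psi :: "nat \<Rightarrow> nat \<Rightarrow> 'a" and lam :: "nat \<Rightarrow> nat \<Rightarrow> 'a \<Rightarrow> nat"
  assumes "s \<ge> 1"
    and "\<forall>m. T m \<le> m"
    and "finite_row s C"
    and "\<exists>psi1 lam1. alg1_admissible s psi1 lam1 \<and>
           is_TS_seq CARD('a) T s (\<lambda>n. alg_digit psi1 C lam1 (int n))"
    and "admissible_bij s psi lam"
  shows "is_TS_seq CARD('a) T s (\<lambda>n. alg_digit psi C lam (alt_seq (2 * n)))
       \<and> is_TS_seq CARD('a) T s (\<lambda>n. alg_digit psi C lam (alt_seq (2 * n + 1)))"
proof -
  have q: "CARD('a) > 0"
    by simp
  obtain psi1 lam1 where "alg1_admissible s psi1 lam1"
    and alg1: "is_TS_seq CARD('a) T s (\<lambda>n. alg_digit psi1 C lam1 (int n))"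
    using assms(4) by blast
  then have "admissible_bij s psi1 lam1"
    by (simp add: alg1_admissible_def)
  from alg1 have gen: "\<forall>m. T m < m \<longrightarrow> generates_net s C m (T m)"
    by (simp only: is_TS_seq_iff_generates_net[OF \<open>admissible_bij s psi1 lam1\<close> assms(3)
      digit_block_qdigit_of_nat[OF q]])
  have "alt_seq (2 * n) = int n" "alt_seq (2 * n + 1) = - int n - 1" for n
    by (simp_all add: alt_seq_def)
  then show ?thesis
    using gen by (simp only: is_TS_seq_iff_generates_net[OF assms(5,3) digit_block_qdigit_of_nat[OF q]]
      is_TS_seq_iff_generates_net[OF assms(5,3) digit_block_qdigit_minus_of_nat[OF q]] simp_thms)
qed

end
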